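(* Let $\mathcal{X}$ and $\mathcal{Y}$ be closed and bounded intervals of $\mathbb{R}$. Let $\{Z_{ij}\}_{i,j\ge 1}$ be real random quantities with $\mathsf{E}(Z_{ij})=0$ and $\mathsf{E}(Z_{ij}Z_{i'j'})=\delta_{ii'}\delta_{jj'}$ (Kronecker delta). Let $\{g_i\}_{i\ge1}$ be continuous real functions on $\mathcal{X}$ and $\{h_j\}_{j\ge1}$ continuous real functions on $\mathcal{Y}$. For each $n$ define the stochastic process $$F^{(n)}(x,y)=\sum_{i=1}^n\sum_{j=1}^n Z_{ij}\,g_i(x)\,h_j(y),\qquad (x,y)\in\mathcal{X}\times\mathcal{Y}.$$ Let $F=\{F(x,y):(x,y)\in\mathcal{X}\times\mathcal{Y}\}$ be a centred real stochastic process with finite second moments. Suppose either that $F=F^{(n)}$ for some finite $n$, or that $F^{(n)}\to F$ in quadratic mean uniformly on $\mathcal{X}\times\mathcal{Y}$, i.e. $\sup_{(x,y)\in\mathcal{X}\times\mathcal{Y}}\mathsf{E}\{(F^{(n)}(x,y)-F(x,y))^2\}\to 0$ as $n\to\infty$. Then $F$ has a continuous separable covariance function.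
   Context: Random quantities are identified up to equality almost surely, and all are centred (mean zero) with finite second moments. The covariance function of a centred process $F$ on $\mathcal{X}\times\mathcal{Y}$ is $\kappa\{(x,y),(x',y')\}=\mathsf{E}\{F(x,y)F(x',y')\}$. The covariance function is called separable if there exist functions $\kappa_x$ on $\mathcal{X}\times\mathcal{X}$ and $\kappa_y$ on $\mathcal{Y}\times\mathcal{Y}$, each symmetric and non-negative definite, such that $\kappa\{(x,y),(x',y')\}=\kappa_x(x,x')\,\kappa_y(y,y')$ for all $(x,y),(x',y')\in\mathcal{X}\times\mathcal{Y}$. "Continuous separable covariance function" means $\kappa$ is separable and continuous on $(\mathcal{X}\times\mathcal{Y})^2$. *)

theory Defs
  imports "HOL-Probability.Probability"
begin

definition sym_on :: "'a set \<Rightarrow> ('a \<Rightarrow> 'a \<Rightarrow> real) \<Rightarrow> bool" where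
  "sym_on S k \<longleftrightarrow> (\<forall>x\<in>S. \<forall>x'\<in>S. k x x' = k x' x)"

definition nonneg_def_on :: "'a set \<Rightarrow> ('a \<Rightarrow> 'a \<Rightarrow> real) \<Rightarrow> bool" where
  "nonneg_def_on S k \<longleftrightarrow>
     (\<forall>(n::nat) (xs::nat \<Rightarrow> 'a) (c::nat \<Rightarrow> real). (\<forall>i<n. xs i \<in> S) \<longrightarrow>
        0 \<le> (\<Sum>i<n. \<Sum>j<n. c i * c j * k (xs i) (xs j)))"

definition cov_fun :: "'w measure \<Rightarrow> (real \<Rightarrow> real \<Rightarrow> 'w \<Rightarrow> real) \<Rightarrow> (real \<times> real) \<Rightarrow> (real \<times> real) \<Rightarrow> real" where
  "cov_fun M F p q = integral\<^sup>L M (\<lambda>\<omega>. F (fst p) (snd p) \<omega> * F (fst q) (snd q) \<omega>)"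

definition separable_cov_on :: "real set \<Rightarrow> real set \<Rightarrow> ((real \<times> real) \<Rightarrow> (real \<times> real) \<Rightarrow> real) \<Rightarrow> bool" where
  "separable_cov_on X Y \<kappa> \<longleftrightarrow>
     (\<exists>kx ky. sym_on X kx \<and> nonneg_def_on X kx \<and> sym_on Y ky \<and> nonneg_def_on Y ky \<and>
        (\<forall>x\<in>X. \<forall>y\<in>Y. \<forall>x'\<in>X. \<forall>y'\<in>Y. \<kappa> (x, y) (x', y') = kx x x' * ky y y'))"

definition Fn :: "(nat \<Rightarrow> nat \<Rightarrow> 'w \<Rightarrow> real) \<Rightarrow> (nat \<Rightarrow> real \<Rightarrow> real) \<Rightarrow> (nat \<Rightarrow> real \<Rightarrow> real)
                  \<Rightarrow> nat \<Rightarrow> real \<Rightarrow> real \<Rightarrow> 'w \<Rightarrow> real" where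
  "Fn Z g h n x y \<omega> = (\<Sum>i=1..n. \<Sum>j=1..n. Z i j \<omega> * g i x * h j y)"

end

theory Submission
  imports Defs
begin

text \<open>
  The covariance of the truncation \<open>Fn\<close> is the product kernel
  \<open>\<kappa>\<^sub>n((x,y),(x',y')) = (\<Sum>\<^sub>i g\<^sub>i(x) g\<^sub>i(x')) (\<Sum>\<^sub>j h\<^sub>j(y) h\<^sub>j(y'))\<close>: it is continuous and satisfies
  \<open>\<kappa>((x,y),(x',y')) \<kappa>((x\<^sub>0,y\<^sub>0),(x\<^sub>0,y\<^sub>0)) = \<kappa>((x,y\<^sub>0),(x',y\<^sub>0)) \<kappa>((x\<^sub>0,y),(x\<^sub>0,y'))\<close>.
  Uniform convergence in quadratic mean makes the covariances converge uniformly (by Young's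
  inequality, since the variances of \<open>F\<close> are bounded by those of one continuous \<open>\<kappa>\<^sub>n\<close> on a compact
  set), so the covariance \<open>\<kappa>\<close> of \<open>F\<close> is continuous and inherits this identity. A symmetric
  non-negative definite kernel with the identity is separable: if \<open>\<kappa>(p\<^sub>0,p\<^sub>0) > 0\<close> for
  \<open>p\<^sub>0 = (x\<^sub>0,y\<^sub>0)\<close>, take \<open>\<kappa>\<^sub>x(x,x') = \<kappa>((x,y\<^sub>0),(x',y\<^sub>0)) / \<kappa>(p\<^sub>0,p\<^sub>0)\<close> and
  \<open>\<kappa>\<^sub>y(y,y') = \<kappa>((x\<^sub>0,y),(x\<^sub>0,y'))\<close>; otherwise the diagonal vanishes and so does \<open>\<kappa>\<close>.
\<close>

definition square_integrable :: "'w measure \<Rightarrow> ('w \<Rightarrow> real) set" where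
  "square_integrable M = {f \<in> borel_measurable M. integrable M (\<lambda>x. (f x)\<^sup>2)}"

lemma square_integrableI:
  "f \<in> borel_measurable M \<Longrightarrow> integrable M (\<lambda>x. (f x)\<^sup>2) \<Longrightarrow> f \<in> square_integrable M"
  by (simp add: square_integrable_def)

lemma square_integrableD:
  assumes "f \<in> square_integrable M"
  shows "f \<in> borel_measurable M" "integrable M (\<lambda>x. (f x)\<^sup>2)"
  using assms by (simp_all add: square_integrable_def)

lemma integrable_mult_square_integrable:
  fixes f g :: "'w \<Rightarrow> real"
  assumes "f \<in> square_integrable M" "g \<in> square_integrable M"
  shows "integrable M (\<lambda>x. f x * g x)"
proof (rule Bochner_Integration.integrable_bound)
  show "integrable M (\<lambda>x. (f x)\<^sup>2 + (g x)\<^sup>2)"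
    using assms by (auto dest: square_integrableD)
  have "\<bar>f x * g x\<bar> \<le> (f x)\<^sup>2 + (g x)\<^sup>2" for x
    using sum_squares_bound[of "\<bar>f x\<bar>" "\<bar>g x\<bar>"]
    by (simp add: abs_mult)
       (use mult_nonneg_nonneg[OF abs_ge_zero abs_ge_zero, of "f x" "g x"] in linarith)
  then show "AE x in M. norm (f x * g x) \<le> norm ((f x)\<^sup>2 + (g x)\<^sup>2)"
    by simp
qed (intro borel_measurable_times square_integrableD(1) assms)

lemma diff_square_integrable:
  fixes f g :: "'w \<Rightarrow> real"
  assumes "f \<in> square_integrable M" "g \<in> square_integrable M"
  shows "(\<lambda>x. f x - g x) \<in> square_integrable M"
proof (rule square_integrableI)
  show "(\<lambda>x. f x - g x) \<in> borel_measurable M"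
    by (intro borel_measurable_diff square_integrableD(1) assms)
  have "integrable M (\<lambda>x. (f x)\<^sup>2 + (g x)\<^sup>2 - 2 * (f x * g x))"
    using square_integrableD(2)[OF assms(1)] square_integrableD(2)[OF assms(2)]
      integrable_mult_square_integrable[OF assms] by auto
  then show "integrable M (\<lambda>x. (f x - g x)\<^sup>2)"
    by (simp add: power2_diff mult.assoc)
qed

lemma young_abs_integral_mult:
  fixes f g :: "'w \<Rightarrow> real"
  assumes "f \<in> square_integrable M" "g \<in> square_integrable M" "s > 0"
  shows "2 * \<bar>\<integral>x. f x * g x \<partial>M\<bar> \<le> (\<integral>x. (f x)\<^sup>2 \<partial>M) / s + s * (\<integral>x. (g x)\<^sup>2 \<partial>M)"
proof -
  have pointwise: "2 * \<bar>f x * g x\<bar> \<le> (f x)\<^sup>2 / s + s * (g x)\<^sup>2" for x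
  proof -
    have "0 \<le> (\<bar>f x\<bar> - s * \<bar>g x\<bar>)\<^sup>2 / s" using \<open>s > 0\<close> by simp
    then show ?thesis using \<open>s > 0\<close>
      by (simp add: power2_eq_square abs_mult field_simps)
  qed
  have "2 * \<bar>\<integral>x. f x * g x \<partial>M\<bar> \<le> 2 * (\<integral>x. \<bar>f x * g x\<bar> \<partial>M)"
    using integral_abs_bound by simp
  also have "\<dots> \<le> (\<integral>x. (f x)\<^sup>2 / s + s * (g x)\<^sup>2 \<partial>M)"
    using integrable_mult_square_integrable[OF assms(1,2)] square_integrableD(2)[OF assms(1)]
      square_integrableD(2)[OF assms(2)] pointwise
    by (subst integral_mult_right_zero[symmetric]) (intro integral_mono; auto)
  also have "\<dots> = (\<integral>x. (f x)\<^sup>2 \<partial>M) / s + s * (\<integral>x. (g x)\<^sup>2 \<partial>M)"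
    using square_integrableD(2)[OF assms(1)] square_integrableD(2)[OF assms(2)] by simp
  finally show ?thesis .
qed

lemma integral_square_le_diff:
  fixes f g :: "'w \<Rightarrow> real"
  assumes "f \<in> square_integrable M" "g \<in> square_integrable M"
  shows "(\<integral>x. (f x)\<^sup>2 \<partial>M) \<le> 2 * (\<integral>x. (g x)\<^sup>2 \<partial>M) + 2 * (\<integral>x. (f x - g x)\<^sup>2 \<partial>M)"
proof -
  note fg = square_integrableD[OF diff_square_integrable[OF assms]]
  have "(f x)\<^sup>2 \<le> 2 * (g x)\<^sup>2 + 2 * (f x - g x)\<^sup>2" for x
    using zero_le_power2[of "f x - 2 * g x"] by (simp add: power2_eq_square algebra_simps)
  then have "(\<integral>x. (f x)\<^sup>2 \<partial>M) \<le> (\<integral>x. 2 * (g x)\<^sup>2 + 2 * (f x - g x)\<^sup>2 \<partial>M)"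
    using fg square_integrableD(2)[OF assms(1)] square_integrableD(2)[OF assms(2)]
    by (intro integral_mono) auto
  also have "\<dots> = 2 * (\<integral>x. (g x)\<^sup>2 \<partial>M) + 2 * (\<integral>x. (f x - g x)\<^sup>2 \<partial>M)"
    using fg square_integrableD(2)[OF assms(2)] by simp
  finally show ?thesis .
qed

lemma abs_integral_mult_diff_le:
  fixes f f' g g' :: "'w \<Rightarrow> real"
  assumes SI: "f \<in> square_integrable M" "f' \<in> square_integrable M"
      "g \<in> square_integrable M" "g' \<in> square_integrable M"
    and "0 < e" "e \<le> 1"
    and close: "(\<integral>x. (g x - f x)\<^sup>2 \<partial>M) \<le> e" "(\<integral>x. (g' x - f' x)\<^sup>2 \<partial>M) \<le> e"
    and bound: "(\<integral>x. (f x)\<^sup>2 \<partial>M) \<le> B" "(\<integral>x. (f' x)\<^sup>2 \<partial>M) \<le> B"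
  shows "\<bar>(\<integral>x. g x * g' x \<partial>M) - (\<integral>x. f x * f' x \<partial>M)\<bar> \<le> 2 * (B + 1) * sqrt e"
proof -
  define s where "s = sqrt e"
  have s: "s > 0" "e / s = s" using \<open>0 < e\<close> by (simp_all add: s_def real_div_sqrt)
  have d: "(\<lambda>x. g x - f x) \<in> square_integrable M" "(\<lambda>x. g' x - f' x) \<in> square_integrable M"
    using SI by (simp_all add: diff_square_integrable)
  have "0 \<le> (\<integral>x. (f x)\<^sup>2 \<partial>M)" by simp
  with bound(1) have "0 \<le> B" by linarith
  have g_bound: "(\<integral>x. (g x)\<^sup>2 \<partial>M) \<le> 2 * B + 2"
    using integral_square_le_diff[OF SI(3,1)] bound(1) close(1) \<open>e \<le> 1\<close> by linarith
  have small: "(\<integral>x. (u x)\<^sup>2 \<partial>M) / s \<le> s" if "(\<integral>x. (u x)\<^sup>2 \<partial>M) \<le> e" for u :: "'w \<Rightarrow> real"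
    using divide_right_mono[OF that, of s] s by simp
  have "(\<integral>x. g x * g' x \<partial>M) - (\<integral>x. f x * f' x \<partial>M)
      = (\<integral>x. (g x - f x) * f' x \<partial>M) + (\<integral>x. (g' x - f' x) * g x \<partial>M)"
  proof -
    have "(\<integral>x. g x * g' x \<partial>M) - (\<integral>x. f x * f' x \<partial>M) = (\<integral>x. g x * g' x - f x * f' x \<partial>M)"
      using SI by (simp add: integrable_mult_square_integrable)
    also have "\<dots> = (\<integral>x. (g x - f x) * f' x + (g' x - f' x) * g x \<partial>M)"
      by (simp add: algebra_simps)
    finally show ?thesis
      using SI d by (simp add: integrable_mult_square_integrable)
  qed
  \<comment> \<open>Young's inequality with weight \<open>s = \<surd>e\<close> on each of the two terms\<close>
  also have "2 * \<bar>\<dots>\<bar> \<le> (s + s * B) + (s + s * (2 * B + 2))"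
    using young_abs_integral_mult[OF d(1) SI(2) s(1)] young_abs_integral_mult[OF d(2) SI(3) s(1)]
      small[OF close(1)] small[OF close(2)]
      abs_triangle_ineq[of "\<integral>x. (g x - f x) * f' x \<partial>M" "\<integral>x. (g' x - f' x) * g x \<partial>M"]
      mult_left_mono[OF bound(2) less_imp_le[OF s(1)]] mult_left_mono[OF g_bound less_imp_le[OF s(1)]]
    by (smt (verit))
  finally show ?thesis
    using mult_nonneg_nonneg[OF \<open>0 \<le> B\<close> less_imp_le[OF s(1)]] by (simp add: s_def algebra_simps)
qed

lemma nonneg_def_on_integral_mult:
  fixes f :: "'p \<Rightarrow> 'w \<Rightarrow> real"
  assumes "\<And>p. p \<in> S \<Longrightarrow> f p \<in> square_integrable M"
  shows "nonneg_def_on S (\<lambda>p q. \<integral>x. f p x * f q x \<partial>M)"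
  unfolding nonneg_def_on_def
proof (intro allI impI)
  fix n :: nat and xs :: "nat \<Rightarrow> 'p" and c :: "nat \<Rightarrow> real"
  assume "\<forall>i<n. xs i \<in> S"
  then have int: "integrable M (\<lambda>x. f (xs i) x * f (xs j) x)" if "i < n" "j < n" for i j
    using that assms by (simp add: integrable_mult_square_integrable)
  have "(\<Sum>i<n. \<Sum>j<n. c i * c j * (\<integral>x. f (xs i) x * f (xs j) x \<partial>M))
      = (\<Sum>i<n. \<integral>x. (\<Sum>j<n. c i * c j * (f (xs i) x * f (xs j) x)) \<partial>M)"
    by (intro sum.cong refl, subst Bochner_Integration.integral_sum) (auto intro!: int)
  also have "\<dots> = (\<integral>x. (\<Sum>i<n. \<Sum>j<n. c i * c j * (f (xs i) x * f (xs j) x)) \<partial>M)"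
    by (subst Bochner_Integration.integral_sum) (auto intro!: int)
  also have "\<dots> = (\<integral>x. (\<Sum>i<n. c i * f (xs i) x)\<^sup>2 \<partial>M)"
    by (simp add: power2_eq_square sum_product mult_ac)
  finally show "0 \<le> (\<Sum>i<n. \<Sum>j<n. c i * c j * (\<integral>x. f (xs i) x * f (xs j) x \<partial>M))"
    by simp
qed

lemma uniform_limit_integral_mult:
  fixes f :: "'p \<Rightarrow> 'w \<Rightarrow> real" and g :: "nat \<Rightarrow> 'p \<Rightarrow> 'w \<Rightarrow> real"
  assumes f: "\<And>p. p \<in> S \<Longrightarrow> f p \<in> square_integrable M"
    and g: "\<And>n p. p \<in> S \<Longrightarrow> g n p \<in> square_integrable M"
    and g_bounded: "\<And>n. \<exists>B. \<forall>p\<in>S. (\<integral>x. (g n p x)\<^sup>2 \<partial>M) \<le> B"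
    and conv: "\<And>e. e > 0 \<Longrightarrow> \<forall>\<^sub>F n in sequentially. \<forall>p\<in>S. (\<integral>x. (g n p x - f p x)\<^sup>2 \<partial>M) \<le> e"
  shows "uniform_limit (S \<times> S) (\<lambda>n (p, q). \<integral>x. g n p x * g n q x \<partial>M)
           (\<lambda>(p, q). \<integral>x. f p x * f q x \<partial>M) sequentially"
proof -
  obtain N where N: "\<And>p. p \<in> S \<Longrightarrow> (\<integral>x. (g N p x - f p x)\<^sup>2 \<partial>M) \<le> 1"
    using eventually_happens'[OF sequentially_bot conv[OF zero_less_one]] by blast
  obtain C where C: "\<And>p. p \<in> S \<Longrightarrow> (\<integral>x. (g N p x)\<^sup>2 \<partial>M) \<le> C"
    using g_bounded by blast
  define B where "B = 2 * max C 0 + 2"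
  have B: "(\<integral>x. (f p x)\<^sup>2 \<partial>M) \<le> B" if "p \<in> S" for p
    using integral_square_le_diff[OF f[OF that] g[of p N, OF that]] C[OF that] N[OF that]
      max.cobounded1[of C 0]
    by (simp add: B_def power2_commute)
  show ?thesis
  proof (rule uniform_limitI)
    fix \<epsilon> :: real assume "\<epsilon> > 0"
    define e where "e = min 1 ((\<epsilon> / (4 * (B + 1)))\<^sup>2)"
    have "B > 0" by (simp add: B_def)
    have "sqrt e \<le> sqrt ((\<epsilon> / (4 * (B + 1)))\<^sup>2)"
      unfolding e_def real_sqrt_le_iff by (rule min.cobounded2)
    also have "\<dots> = \<epsilon> / (4 * (B + 1))"
      using \<open>\<epsilon> > 0\<close> \<open>B > 0\<close> by simp
    finally have "2 * (B + 1) * sqrt e \<le> \<epsilon> / 2"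
      using \<open>B > 0\<close> by (simp add: field_simps)
    then have e: "0 < e" "e \<le> 1" "2 * (B + 1) * sqrt e < \<epsilon>"
      using \<open>\<epsilon> > 0\<close> \<open>B > 0\<close> by (auto simp: e_def)
    show "\<forall>\<^sub>F n in sequentially. \<forall>z\<in>S \<times> S.
        dist ((\<lambda>(p, q). \<integral>x. g n p x * g n q x \<partial>M) z) ((\<lambda>(p, q). \<integral>x. f p x * f q x \<partial>M) z) < \<epsilon>"
      using conv[OF e(1)]
    proof eventually_elim
      case (elim n)
      show ?case
      proof (clarify)
        fix p q assume "p \<in> S" "q \<in> S"
        with elim have "\<bar>(\<integral>x. g n p x * g n q x \<partial>M) - (\<integral>x. f p x * f q x \<partial>M)\<bar> \<le> 2 * (B + 1) * sqrt e"
          by (intro abs_integral_mult_diff_le f g B e(1,2)) auto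
        with e(3) show "dist (\<integral>x. g n p x * g n q x \<partial>M) (\<integral>x. f p x * f q x \<partial>M) < \<epsilon>"
          by (simp add: dist_real_def)
      qed
    qed
  qed
qed

definition factorization_identity_on ::
    "'a set \<Rightarrow> 'b set \<Rightarrow> ('a \<times> 'b \<Rightarrow> 'a \<times> 'b \<Rightarrow> real) \<Rightarrow> bool" where
  "factorization_identity_on X Y \<kappa> \<longleftrightarrow>
     (\<forall>x\<in>X. \<forall>x'\<in>X. \<forall>x\<^sub>0\<in>X. \<forall>y\<in>Y. \<forall>y'\<in>Y. \<forall>y\<^sub>0\<in>Y.
        \<kappa> (x, y) (x', y') * \<kappa> (x\<^sub>0, y\<^sub>0) (x\<^sub>0, y\<^sub>0) = \<kappa> (x, y\<^sub>0) (x', y\<^sub>0) * \<kappa> (x\<^sub>0, y) (x\<^sub>0, y'))"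

lemma factorization_identity_on_limit:
  assumes "\<And>n. factorization_identity_on X Y (\<kappa>s n)"
    and lim: "\<And>p q. p \<in> X \<times> Y \<Longrightarrow> q \<in> X \<times> Y \<Longrightarrow> (\<lambda>n. \<kappa>s n p q) \<longlonglongrightarrow> \<kappa> p q"
  shows "factorization_identity_on X Y \<kappa>"
  unfolding factorization_identity_on_def
proof (intro ballI)
  fix x x' x\<^sub>0 y y' y\<^sub>0 assume points: "x \<in> X" "x' \<in> X" "x\<^sub>0 \<in> X" "y \<in> Y" "y' \<in> Y" "y\<^sub>0 \<in> Y"
  have identity: "(\<lambda>n. \<kappa>s n (x, y) (x', y') * \<kappa>s n (x\<^sub>0, y\<^sub>0) (x\<^sub>0, y\<^sub>0))
      = (\<lambda>n. \<kappa>s n (x, y\<^sub>0) (x', y\<^sub>0) * \<kappa>s n (x\<^sub>0, y) (x\<^sub>0, y'))"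
    using assms(1)[unfolded factorization_identity_on_def, rule_format, OF points] by (rule ext)
  have "(\<lambda>n. \<kappa>s n (x, y) (x', y') * \<kappa>s n (x\<^sub>0, y\<^sub>0) (x\<^sub>0, y\<^sub>0))
      \<longlonglongrightarrow> \<kappa> (x, y) (x', y') * \<kappa> (x\<^sub>0, y\<^sub>0) (x\<^sub>0, y\<^sub>0)"
    using points by (intro tendsto_mult lim) auto
  moreover have "(\<lambda>n. \<kappa>s n (x, y\<^sub>0) (x', y\<^sub>0) * \<kappa>s n (x\<^sub>0, y) (x\<^sub>0, y'))
      \<longlonglongrightarrow> \<kappa> (x, y\<^sub>0) (x', y\<^sub>0) * \<kappa> (x\<^sub>0, y) (x\<^sub>0, y')"
    using points by (intro tendsto_mult lim) auto
  ultimately show "\<kappa> (x, y) (x', y') * \<kappa> (x\<^sub>0, y\<^sub>0) (x\<^sub>0, y\<^sub>0) = \<kappa> (x, y\<^sub>0) (x', y\<^sub>0) * \<kappa> (x\<^sub>0, y) (x\<^sub>0, y')"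
    unfolding identity by (rule LIMSEQ_unique)
qed

lemma nonneg_def_on_diag_nonneg:
  assumes "nonneg_def_on S k" "p \<in> S"
  shows "0 \<le> k p p"
  using assms(1)[unfolded nonneg_def_on_def, rule_format, of 1 "\<lambda>_. p" "\<lambda>_. 1"] assms(2) by simp

lemma nonneg_def_on_eq_zero_if_diag_eq_zero:
  assumes "sym_on S k" "nonneg_def_on S k" "p \<in> S" "q \<in> S" "k p p = 0" "k q q = 0"
  shows "k p q = 0"
proof -
  define xs where "xs i = (if i = 0 then p else q)" for i :: nat
  define c where "c i = (if i = 0 then 1 else - k p q)" for i :: nat
  have "0 \<le> (\<Sum>i<2. \<Sum>j<2. c i * c j * k (xs i) (xs j))"
    using assms(2)[unfolded nonneg_def_on_def, rule_format, of 2 xs c] assms(3,4) by (simp add: xs_def)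
  also have "\<dots> = - 2 * (k p q)\<^sup>2"
    using assms(1,3-6) by (simp add: sym_on_def xs_def c_def numeral_2_eq_2 power2_eq_square)
  finally show ?thesis by simp
qed

lemma nonneg_def_on_compose:
  assumes "nonneg_def_on S k" "\<And>x. x \<in> T \<Longrightarrow> f x \<in> S"
  shows "nonneg_def_on T (\<lambda>x x'. k (f x) (f x'))"
  unfolding nonneg_def_on_def
proof (intro allI impI)
  fix n :: nat and xs :: "nat \<Rightarrow> 'b" and c :: "nat \<Rightarrow> real"
  assume "\<forall>i<n. xs i \<in> T"
  then show "0 \<le> (\<Sum>i<n. \<Sum>j<n. c i * c j * k (f (xs i)) (f (xs j)))"
    using assms(1)[unfolded nonneg_def_on_def, rule_format, of n "f \<circ> xs" c] assms(2) by simp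
qed

lemma nonneg_def_on_mult_const:
  assumes "nonneg_def_on S k" "0 \<le> a"
  shows "nonneg_def_on S (\<lambda>x x'. a * k x x')"
  unfolding nonneg_def_on_def
proof (intro allI impI)
  fix n :: nat and xs :: "nat \<Rightarrow> 'a" and c :: "nat \<Rightarrow> real"
  assume "\<forall>i<n. xs i \<in> S"
  then have "0 \<le> a * (\<Sum>i<n. \<Sum>j<n. c i * c j * k (xs i) (xs j))"
    using assms by (intro mult_nonneg_nonneg) (auto simp: nonneg_def_on_def)
  then show "0 \<le> (\<Sum>i<n. \<Sum>j<n. c i * c j * (a * k (xs i) (xs j)))"
    by (simp add: sum_distrib_left mult_ac)
qed

lemma separable_cov_on_if_factorization_identity:
  fixes \<kappa> :: "real \<times> real \<Rightarrow> real \<times> real \<Rightarrow> real"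
  assumes sym: "sym_on (X \<times> Y) \<kappa>" and nonneg: "nonneg_def_on (X \<times> Y) \<kappa>"
    and fact: "factorization_identity_on X Y \<kappa>"
  shows "separable_cov_on X Y \<kappa>"
proof (cases "\<exists>p\<in>X \<times> Y. \<kappa> p p \<noteq> 0")
  case True
  then obtain x\<^sub>0 y\<^sub>0 where "x\<^sub>0 \<in> X" "y\<^sub>0 \<in> Y" and "\<kappa> (x\<^sub>0, y\<^sub>0) (x\<^sub>0, y\<^sub>0) \<noteq> 0"
    by auto
  moreover define L where "L = \<kappa> (x\<^sub>0, y\<^sub>0) (x\<^sub>0, y\<^sub>0)"
  ultimately have "L > 0"
    using nonneg_def_on_diag_nonneg[OF nonneg] by fastforce
  show ?thesis
    unfolding separable_cov_on_def
  proof (intro exI conjI)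
    show "sym_on X (\<lambda>x x'. 1 / L * \<kappa> (x, y\<^sub>0) (x', y\<^sub>0))" "sym_on Y (\<lambda>y y'. \<kappa> (x\<^sub>0, y) (x\<^sub>0, y'))"
      using sym \<open>x\<^sub>0 \<in> X\<close> \<open>y\<^sub>0 \<in> Y\<close> by (auto simp: sym_on_def)
    show "nonneg_def_on X (\<lambda>x x'. 1 / L * \<kappa> (x, y\<^sub>0) (x', y\<^sub>0))"
      using \<open>L > 0\<close> \<open>y\<^sub>0 \<in> Y\<close>
      by (intro nonneg_def_on_mult_const nonneg_def_on_compose[OF nonneg]) auto
    show "nonneg_def_on Y (\<lambda>y y'. \<kappa> (x\<^sub>0, y) (x\<^sub>0, y'))"
      using \<open>x\<^sub>0 \<in> X\<close> by (intro nonneg_def_on_compose[OF nonneg]) auto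
    show "\<forall>x\<in>X. \<forall>y\<in>Y. \<forall>x'\<in>X. \<forall>y'\<in>Y.
        \<kappa> (x, y) (x', y') = 1 / L * \<kappa> (x, y\<^sub>0) (x', y\<^sub>0) * \<kappa> (x\<^sub>0, y) (x\<^sub>0, y')"
    proof (intro ballI)
      fix x y x' y' assume "x \<in> X" "y \<in> Y" "x' \<in> X" "y' \<in> Y"
      with fact \<open>x\<^sub>0 \<in> X\<close> \<open>y\<^sub>0 \<in> Y\<close>
      have "\<kappa> (x, y) (x', y') * L = \<kappa> (x, y\<^sub>0) (x', y\<^sub>0) * \<kappa> (x\<^sub>0, y) (x\<^sub>0, y')"
        by (simp add: factorization_identity_on_def L_def)
      with \<open>L > 0\<close>
      show "\<kappa> (x, y) (x', y') = 1 / L * \<kappa> (x, y\<^sub>0) (x', y\<^sub>0) * \<kappa> (x\<^sub>0, y) (x\<^sub>0, y')"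
        by (simp add: field_simps)
    qed
  qed
next
  case False
  then have "\<kappa> p q = 0" if "p \<in> X \<times> Y" "q \<in> X \<times> Y" for p q
    using nonneg_def_on_eq_zero_if_diag_eq_zero[OF sym nonneg that] that by auto
  then show ?thesis
    unfolding separable_cov_on_def
    by (intro exI[of _ "\<lambda>_ _. 0"]) (auto simp: sym_on_def nonneg_def_on_def)
qed

definition Fn_cov :: "(nat \<Rightarrow> real \<Rightarrow> real) \<Rightarrow> (nat \<Rightarrow> real \<Rightarrow> real) \<Rightarrow> nat
                      \<Rightarrow> real \<times> real \<Rightarrow> real \<times> real \<Rightarrow> real" where
  "Fn_cov g h n p q = (\<Sum>i=1..n. g i (fst p) * g i (fst q)) * (\<Sum>j=1..n. h j (snd p) * h j (snd q))"

lemma Fn_mult_eq: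
  "Fn Z g h n x y \<omega> * Fn Z g h n x' y' \<omega> =
    (\<Sum>i=1..n. \<Sum>j=1..n. \<Sum>i'=1..n. \<Sum>j'=1..n.
       (g i x * h j y * g i' x' * h j' y') * (Z i j \<omega> * Z i' j' \<omega>))"
proof -
  have "Fn Z g h n x y \<omega> * Fn Z g h n x' y' \<omega> =
    (\<Sum>i=1..n. \<Sum>j=1..n. \<Sum>i'=1..n. \<Sum>j'=1..n.
       (Z i j \<omega> * g i x * h j y) * (Z i' j' \<omega> * g i' x' * h j' y'))"
    unfolding Fn_def sum_distrib_right by (simp only: sum_distrib_left)
  then show ?thesis
    by (simp add: mult_ac)
qed

lemma sum_sum_mult_delta:
  fixes f :: "'a \<Rightarrow> 'b \<Rightarrow> real"
  assumes "finite A" "finite B" "i \<in> A" "j \<in> B"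
  shows "(\<Sum>i'\<in>A. \<Sum>j'\<in>B. f i' j' * (if i = i' \<and> j = j' then 1 else 0)) = f i j"
proof -
  have "(\<Sum>j'\<in>B. f i' j' * (if i = i' \<and> j = j' then 1 else 0)) = (if i = i' then f i' j else 0)" for i'
    using assms by (cases "i = i'") (simp_all add: if_distrib cong: if_cong)
  then show ?thesis
    using assms by simp
qed

lemma has_bochner_integral_Fn_mult:
  assumes Z_sq: "\<And>i j. 1 \<le> i \<Longrightarrow> 1 \<le> j \<Longrightarrow> Z i j \<in> square_integrable M"
    and Z_cov: "\<And>i j i' j'. 1 \<le> i \<Longrightarrow> 1 \<le> j \<Longrightarrow> 1 \<le> i' \<Longrightarrow> 1 \<le> j' \<Longrightarrow>
       (\<integral>\<omega>. Z i j \<omega> * Z i' j' \<omega> \<partial>M) = (if i = i' \<and> j = j' then 1 else 0)"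
  shows "has_bochner_integral M (\<lambda>\<omega>. Fn Z g h n x y \<omega> * Fn Z g h n x' y' \<omega>) (Fn_cov g h n (x, y) (x', y'))"
proof -
  have "has_bochner_integral M (\<lambda>\<omega>. Fn Z g h n x y \<omega> * Fn Z g h n x' y' \<omega>)
     (\<Sum>i=1..n. \<Sum>j=1..n. \<Sum>i'=1..n. \<Sum>j'=1..n.
       (g i x * h j y * g i' x' * h j' y') * (if i = i' \<and> j = j' then 1 else 0))"
    unfolding Fn_mult_eq
    by (intro has_bochner_integral_sum has_bochner_integral_mult_right)
       (simp add: has_bochner_integral_iff Z_cov Z_sq integrable_mult_square_integrable)
  also have "\<dots> = (\<Sum>i=1..n. \<Sum>j=1..n. g i x * h j y * g i x' * h j y')"
    by (intro sum.cong refl sum_sum_mult_delta) auto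
  also have "\<dots> = Fn_cov g h n (x, y) (x', y')"
    by (simp add: Fn_cov_def sum_product mult_ac)
  finally show ?thesis .
qed

lemma Fn_square_integrable:
  assumes Z_sq: "\<And>i j. 1 \<le> i \<Longrightarrow> 1 \<le> j \<Longrightarrow> Z i j \<in> square_integrable M"
    and Z_cov: "\<And>i j i' j'. 1 \<le> i \<Longrightarrow> 1 \<le> j \<Longrightarrow> 1 \<le> i' \<Longrightarrow> 1 \<le> j' \<Longrightarrow>
       (\<integral>\<omega>. Z i j \<omega> * Z i' j' \<omega> \<partial>M) = (if i = i' \<and> j = j' then 1 else 0)"
  shows "Fn Z g h n x y \<in> square_integrable M"
proof (rule square_integrableI)
  show "Fn Z g h n x y \<in> borel_measurable M"
    unfolding Fn_def
    by (intro borel_measurable_sum borel_measurable_times borel_measurable_const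
        square_integrableD(1)[OF Z_sq]) auto
  show "integrable M (\<lambda>\<omega>. (Fn Z g h n x y \<omega>)\<^sup>2)"
    using has_bochner_integral_Fn_mult[OF assms, of g h n x y x y]
    by (simp add: has_bochner_integral_iff power2_eq_square)
qed

lemma factorization_identity_on_Fn_cov: "factorization_identity_on X Y (Fn_cov g h n)"
  unfolding factorization_identity_on_def Fn_cov_def by (simp add: mult_ac)

lemma continuous_on_Fn_cov:
  assumes "\<And>i. 1 \<le> i \<Longrightarrow> continuous_on X (g i)" "\<And>j. 1 \<le> j \<Longrightarrow> continuous_on Y (h j)"
  shows "continuous_on ((X \<times> Y) \<times> (X \<times> Y)) (\<lambda>(p, q). Fn_cov g h n p q)"
proof -
  have "continuous_on ((X \<times> Y) \<times> (X \<times> Y)) (\<lambda>z. g i (fst (fst z)))"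
      "continuous_on ((X \<times> Y) \<times> (X \<times> Y)) (\<lambda>z. g i (fst (snd z)))" if "1 \<le> i" for i
    by (rule continuous_on_compose2[OF assms(1)[OF that]], intro continuous_intros, force)+
  moreover have "continuous_on ((X \<times> Y) \<times> (X \<times> Y)) (\<lambda>z. h j (snd (fst z)))"
      "continuous_on ((X \<times> Y) \<times> (X \<times> Y)) (\<lambda>z. h j (snd (snd z)))" if "1 \<le> j" for j
    by (rule continuous_on_compose2[OF assms(2)[OF that]], intro continuous_intros, force)+
  ultimately show ?thesis
    unfolding Fn_cov_def case_prod_unfold by (intro continuous_intros) auto
qed

lemma Fn_cov_diag_bounded:
  assumes "compact X" "compact Y"
    and "\<And>i. 1 \<le> i \<Longrightarrow> continuous_on X (g i)" "\<And>j. 1 \<le> j \<Longrightarrow> continuous_on Y (h j)"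
  shows "\<exists>B. \<forall>p\<in>X \<times> Y. Fn_cov g h n p p \<le> B"
proof -
  have "continuous_on (X \<times> Y) (\<lambda>p. (\<lambda>(p, q). Fn_cov g h n p q) (p, p))"
    by (rule continuous_on_compose2[OF continuous_on_Fn_cov[OF assms(3,4)]])
       (auto intro: continuous_intros)
  then have "bounded ((\<lambda>p. Fn_cov g h n p p) ` (X \<times> Y))"
    using assms(1,2)
    by (simp only: prod.case) (intro compact_imp_bounded compact_continuous_image compact_Times)
  then show ?thesis
    by (auto simp: bounded_iff dest: abs_le_D1)
qed

lemma cov_fun_eq_Fn_cov:
  assumes Z_sq: "\<And>i j. 1 \<le> i \<Longrightarrow> 1 \<le> j \<Longrightarrow> Z i j \<in> square_integrable M"
    and Z_cov: "\<And>i j i' j'. 1 \<le> i \<Longrightarrow> 1 \<le> j \<Longrightarrow> 1 \<le> i' \<Longrightarrow> 1 \<le> j' \<Longrightarrow>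
       (\<integral>\<omega>. Z i j \<omega> * Z i' j' \<omega> \<partial>M) = (if i = i' \<and> j = j' then 1 else 0)"
    and [measurable]: "F x y \<in> borel_measurable M" "F x' y' \<in> borel_measurable M"
    and "AE \<omega> in M. F x y \<omega> = Fn Z g h n x y \<omega>" "AE \<omega> in M. F x' y' \<omega> = Fn Z g h n x' y' \<omega>"
  shows "cov_fun M F (x, y) (x', y') = Fn_cov g h n (x, y) (x', y')"
proof -
  have [measurable]: "Fn Z g h n u v \<in> borel_measurable M" for u v
    using Fn_square_integrable[OF Z_sq Z_cov] by (rule square_integrableD)
  have "cov_fun M F (x, y) (x', y') = (\<integral>\<omega>. Fn Z g h n x y \<omega> * Fn Z g h n x' y' \<omega> \<partial>M)"
    unfolding cov_fun_def using assms(5,6) by (intro integral_cong_AE) auto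
  also have "\<dots> = Fn_cov g h n (x, y) (x', y')"
    using has_bochner_integral_Fn_mult[OF Z_sq Z_cov] by (rule has_bochner_integral_integral_eq)
  finally show ?thesis .
qed

lemma uniform_limit_Fn_cov_cov_fun:
  fixes F :: "real \<Rightarrow> real \<Rightarrow> 'w \<Rightarrow> real"
  assumes Z_sq: "\<And>i j. 1 \<le> i \<Longrightarrow> 1 \<le> j \<Longrightarrow> Z i j \<in> square_integrable M"
    and Z_cov: "\<And>i j i' j'. 1 \<le> i \<Longrightarrow> 1 \<le> j \<Longrightarrow> 1 \<le> i' \<Longrightarrow> 1 \<le> j' \<Longrightarrow>
       (\<integral>\<omega>. Z i j \<omega> * Z i' j' \<omega> \<partial>M) = (if i = i' \<and> j = j' then 1 else 0)"
    and F_sq: "\<And>x y. x \<in> X \<Longrightarrow> y \<in> Y \<Longrightarrow> F x y \<in> square_integrable M"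
    and bounded: "\<And>n. \<exists>B. \<forall>p\<in>X \<times> Y. Fn_cov g h n p p \<le> B"
    and conv: "(\<exists>n. \<forall>x\<in>X. \<forall>y\<in>Y. AE \<omega> in M. F x y \<omega> = Fn Z g h n x y \<omega>)
       \<or> (\<forall>e>0. \<exists>N. \<forall>n\<ge>N. \<forall>x\<in>X. \<forall>y\<in>Y. (\<integral>\<omega>. (Fn Z g h n x y \<omega> - F x y \<omega>)\<^sup>2 \<partial>M) \<le> e)"
  shows "\<exists>m. uniform_limit ((X \<times> Y) \<times> (X \<times> Y)) (\<lambda>n (p, q). Fn_cov g h (m n) p q)
           (\<lambda>(p, q). cov_fun M F p q) sequentially"
  using conv
proof (elim disjE exE)
  fix n assume AE_eq: "\<forall>x\<in>X. \<forall>y\<in>Y. AE \<omega> in M. F x y \<omega> = Fn Z g h n x y \<omega>"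
  have eq: "cov_fun M F p q = Fn_cov g h n p q" if "p \<in> X \<times> Y" "q \<in> X \<times> Y" for p q
    using that AE_eq
    by (cases p, cases q) (auto intro!: cov_fun_eq_Fn_cov[OF Z_sq Z_cov] square_integrableD(1)[OF F_sq])
  have "uniform_limit ((X \<times> Y) \<times> (X \<times> Y)) (\<lambda>_ (p, q). Fn_cov g h n p q)
      (\<lambda>(p, q). cov_fun M F p q) sequentially"
    by (intro uniform_limitI always_eventually) (auto simp: eq)
  then show ?thesis by (intro exI[of _ "\<lambda>_. n"])
next
  assume lim: "\<forall>e>0. \<exists>N. \<forall>n\<ge>N. \<forall>x\<in>X. \<forall>y\<in>Y. (\<integral>\<omega>. (Fn Z g h n x y \<omega> - F x y \<omega>)\<^sup>2 \<partial>M) \<le> e"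
  have Fn_int: "(\<integral>\<omega>. Fn Z g h n (fst p) (snd p) \<omega> * Fn Z g h n (fst q) (snd q) \<omega> \<partial>M) = Fn_cov g h n p q"
    for n p q
    using has_bochner_integral_integral_eq[OF has_bochner_integral_Fn_mult[OF Z_sq Z_cov]] by simp
  have "uniform_limit ((X \<times> Y) \<times> (X \<times> Y))
      (\<lambda>n (p, q). \<integral>\<omega>. Fn Z g h n (fst p) (snd p) \<omega> * Fn Z g h n (fst q) (snd q) \<omega> \<partial>M)
      (\<lambda>(p, q). \<integral>\<omega>. F (fst p) (snd p) \<omega> * F (fst q) (snd q) \<omega> \<partial>M) sequentially"
  proof (rule uniform_limit_integral_mult)
    show "F (fst p) (snd p) \<in> square_integrable M" if "p \<in> X \<times> Y" for p
      using that by (intro F_sq) auto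
    show "Fn Z g h n (fst p) (snd p) \<in> square_integrable M" for n p
      by (rule Fn_square_integrable[OF Z_sq Z_cov])
    show "\<exists>B. \<forall>p\<in>X \<times> Y. (\<integral>\<omega>. (Fn Z g h n (fst p) (snd p) \<omega>)\<^sup>2 \<partial>M) \<le> B" for n
      using bounded[of n] by (simp add: power2_eq_square Fn_int)
    show "\<forall>\<^sub>F n in sequentially. \<forall>p\<in>X \<times> Y.
        (\<integral>\<omega>. (Fn Z g h n (fst p) (snd p) \<omega> - F (fst p) (snd p) \<omega>)\<^sup>2 \<partial>M) \<le> e" if "e > 0" for e
      using lim that by (auto simp: eventually_sequentially)
  qed
  then have "uniform_limit ((X \<times> Y) \<times> (X \<times> Y)) (\<lambda>n (p, q). Fn_cov g h n p q)
      (\<lambda>(p, q). cov_fun M F p q) sequentially"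
    by (simp add: Fn_int cov_fun_def)
  then show ?thesis by (intro exI[of _ id]) simp
qed


theorem proposition1:
  fixes M :: "'w measure"
    and a b c d :: real
    and Z :: "nat \<Rightarrow> nat \<Rightarrow> 'w \<Rightarrow> real"
    and g h :: "nat \<Rightarrow> real \<Rightarrow> real"
    and F :: "real \<Rightarrow> real \<Rightarrow> 'w \<Rightarrow> real"
  assumes M: "prob_space M"
    and Z_meas: "\<And>i j. i \<ge> 1 \<Longrightarrow> j \<ge> 1 \<Longrightarrow> Z i j \<in> borel_measurable M"
    and Z_sq: "\<And>i j. i \<ge> 1 \<Longrightarrow> j \<ge> 1 \<Longrightarrow> integrable M (\<lambda>\<omega>. (Z i j \<omega>)\<^sup>2)"
    and Z_mean: "\<And>i j. i \<ge> 1 \<Longrightarrow> j \<ge> 1 \<Longrightarrow> integral\<^sup>L M (Z i j) = 0"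
    and Z_cov: "\<And>i j i' j'. i \<ge> 1 \<Longrightarrow> j \<ge> 1 \<Longrightarrow> i' \<ge> 1 \<Longrightarrow> j' \<ge> 1 \<Longrightarrow>
       integral\<^sup>L M (\<lambda>\<omega>. Z i j \<omega> * Z i' j' \<omega>) = (if i = i' \<and> j = j' then 1 else 0)"
    and g_cont: "\<And>i. i \<ge> 1 \<Longrightarrow> continuous_on {a..b} (g i)"
    and h_cont: "\<And>j. j \<ge> 1 \<Longrightarrow> continuous_on {c..d} (h j)"
    and F_meas: "\<And>x y. x \<in> {a..b} \<Longrightarrow> y \<in> {c..d} \<Longrightarrow> F x y \<in> borel_measurable M"
    and F_sq: "\<And>x y. x \<in> {a..b} \<Longrightarrow> y \<in> {c..d} \<Longrightarrow> integrable M (\<lambda>\<omega>. (F x y \<omega>)\<^sup>2)"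
    and F_mean: "\<And>x y. x \<in> {a..b} \<Longrightarrow> y \<in> {c..d} \<Longrightarrow> integral\<^sup>L M (F x y) = 0"
    and conv: "(\<exists>n. \<forall>x\<in>{a..b}. \<forall>y\<in>{c..d}. AE \<omega> in M. F x y \<omega> = Fn Z g h n x y \<omega>)
       \<or> (\<forall>e>0. \<exists>N. \<forall>n\<ge>N. \<forall>x\<in>{a..b}. \<forall>y\<in>{c..d}.
            integral\<^sup>L M (\<lambda>\<omega>. (Fn Z g h n x y \<omega> - F x y \<omega>)\<^sup>2) \<le> e)"
  shows "separable_cov_on {a..b} {c..d} (cov_fun M F)
       \<and> continuous_on (({a..b} \<times> {c..d}) \<times> ({a..b} \<times> {c..d})) (\<lambda>(p, q). cov_fun M F p q)"
proof -
  have Z_L2: "\<And>i j. 1 \<le> i \<Longrightarrow> 1 \<le> j \<Longrightarrow> Z i j \<in> square_integrable M"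
    using Z_meas Z_sq by (simp add: square_integrableI)
  have F_L2: "\<And>x y. x \<in> {a..b} \<Longrightarrow> y \<in> {c..d} \<Longrightarrow> F x y \<in> square_integrable M"
    using F_meas F_sq by (simp add: square_integrableI)
  obtain m where lim: "uniform_limit (({a..b} \<times> {c..d}) \<times> ({a..b} \<times> {c..d}))
      (\<lambda>n (p, q). Fn_cov g h (m n) p q) (\<lambda>(p, q). cov_fun M F p q) sequentially"
    using uniform_limit_Fn_cov_cov_fun[OF Z_L2 Z_cov F_L2
        Fn_cov_diag_bounded[OF compact_Icc compact_Icc g_cont h_cont] conv]
    by blast
  have "continuous_on (({a..b} \<times> {c..d}) \<times> ({a..b} \<times> {c..d})) (\<lambda>(p, q). cov_fun M F p q)"
    using continuous_on_Fn_cov[OF g_cont h_cont]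
    by (intro uniform_limit_theorem[OF always_eventually lim]) simp_all
  moreover have "factorization_identity_on {a..b} {c..d} (cov_fun M F)"
  proof (rule factorization_identity_on_limit[OF factorization_identity_on_Fn_cov])
    show "(\<lambda>n. Fn_cov g h (m n) p q) \<longlonglongrightarrow> cov_fun M F p q"
      if "p \<in> {a..b} \<times> {c..d}" "q \<in> {a..b} \<times> {c..d}" for p q
      using tendsto_uniform_limitI[OF lim, of "(p, q)"] that by simp
  qed
  moreover have "sym_on ({a..b} \<times> {c..d}) (cov_fun M F)"
    by (simp add: sym_on_def cov_fun_def mult.commute)
  moreover have "nonneg_def_on ({a..b} \<times> {c..d}) (cov_fun M F)"
    unfolding cov_fun_def by (rule nonneg_def_on_integral_mult) (auto intro: F_L2)
  ultimately show ?thesis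
    by (simp add: separable_cov_on_if_factorization_identity)
qed

end
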